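(* Let $N(x)=\frac{1}{\sqrt{2\pi}}\int_{-\infty}^x e^{-t^2/2}\,dt$ be the standard normal cumulative distribution function. For $\alpha>0$ define the standardized call function $\chi_\alpha:(0,+\infty)\to\mathbb{R}$ by \[ \chi_\alpha(x) := N\Big(\tfrac{\alpha}{2}\big(x-\tfrac{1}{x}\big)\Big) - e^{\alpha^2/2}\, N\Big(-\tfrac{\alpha}{2}\big(x+\tfrac{1}{x}\big)\Big), \qquad x>0. \] Then for every $\alpha>0$: (i) $\lim_{x\to 0^+}\chi_\alpha(x)=0$ and $\lim_{x\to+\infty}\chi_\alpha(x)=1$; (ii) $\chi_\alpha$ is strictly increasing on $(0,+\infty)$; (iii) $\chi_\alpha$ is strictly convex on $(0,1]$ and strictly concave on $[1,+\infty)$. *)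

theory Defs
  imports "HOL-Analysis.Analysis"
begin

definition normal_cdf :: "real \<Rightarrow> real" where
  "normal_cdf x = (1 / sqrt (2 * pi)) * integral {..x} (\<lambda>t. exp (- (t^2) / 2))"

definition chi :: "real \<Rightarrow> real \<Rightarrow> real" where
  "chi \<alpha> x = normal_cdf ((\<alpha> / 2) * (x - 1 / x))
              - exp (\<alpha>^2 / 2) * normal_cdf (- (\<alpha> / 2) * (x + 1 / x))"

definition strict_convex_on :: "real set \<Rightarrow> (real \<Rightarrow> real) \<Rightarrow> bool" where
  "strict_convex_on S f \<longleftrightarrow> convex S \<and>
     (\<forall>x\<in>S. \<forall>y\<in>S. \<forall>t. x \<noteq> y \<and> 0 < t \<and> t < 1 \<longrightarrow>
        f ((1 - t) * x + t * y) < (1 - t) * f x + t * f y)"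

definition strict_concave_on :: "real set \<Rightarrow> (real \<Rightarrow> real) \<Rightarrow> bool" where
  "strict_concave_on S f \<longleftrightarrow> strict_convex_on S (\<lambda>x. - f x)"

end

theory Submission
  imports Defs "HOL-Probability.Probability" "HOL-Real_Asymp.Real_Asymp"
begin

text \<open>Writing \<open>u x = \<alpha>/2 * (x - 1/x)\<close> and \<open>v x = \<alpha>/2 * (x + 1/x)\<close>, one has
  \<open>v\<^sup>2 - u\<^sup>2 = \<alpha>\<^sup>2\<close>, so \<open>exp (\<alpha>\<^sup>2/2) * \<phi> (v x) = \<phi> (u x)\<close> for the normal density \<open>\<phi>\<close>.
  With this identity the two terms of the derivative of \<open>chi \<alpha>\<close> combine to
  \<open>\<alpha> * \<phi> (u x) > 0\<close>. Since \<open>\<phi>\<close> decreases in \<open>\<bar>u\<bar>\<close> and \<open>\<bar>u x\<bar>\<close> decreases on \<open>(0,1]\<close> and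
  increases on \<open>[1,\<infinity>)\<close>, the derivative increases on \<open>(0,1]\<close> and decreases on \<open>[1,\<infinity>)\<close>.
  The limits follow from \<open>u, -v \<rightarrow> -\<infinity>\<close> as \<open>x \<rightarrow> 0\<close> and \<open>u \<rightarrow> \<infinity>, -v \<rightarrow> -\<infinity>\<close> as \<open>x \<rightarrow> \<infinity>\<close>.\<close>

lemma measure_std_normal_distribution:
  assumes [measurable]: "A \<in> sets borel"
  shows "measure std_normal_distribution A = integral A std_normal_density"
proof -
  have integrable: "set_integrable lborel A std_normal_density"
    unfolding set_integrable_def by (rule integrable_mult_indicator) auto
  have "measure std_normal_distribution A = integral\<^sup>L std_normal_distribution (indicator A)"
    by simp
  also have "\<dots> = integral\<^sup>L lborel (\<lambda>x. std_normal_density x *\<^sub>R indicator A x)"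
    by (rule integral_density) auto
  also have "\<dots> = (LINT x:A|lborel. std_normal_density x)"
    unfolding set_lebesgue_integral_def by (simp add: mult.commute)
  also have "\<dots> = integral A std_normal_density"
    by (rule set_borel_integral_eq_integral(2)[OF integrable])
  finally show ?thesis .
qed

lemma normal_cdf_eq_cdf: "normal_cdf x = cdf std_normal_distribution x"
proof -
  have "cdf std_normal_distribution x = integral {..x} std_normal_density"
    by (simp add: cdf_def measure_std_normal_distribution)
  also have "\<dots> = normal_cdf x"
    unfolding normal_cdf_def std_normal_density_def by simp
  finally show ?thesis by simp
qed

lemma normal_cdf_at_top: "(normal_cdf \<longlongrightarrow> 1) at_top"
  unfolding normal_cdf_eq_cdf[abs_def]
  by (rule real_distribution.cdf_lim_at_top_prob[OF real_dist_normal_dist])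

lemma normal_cdf_at_bot: "(normal_cdf \<longlongrightarrow> 0) at_bot"
  unfolding normal_cdf_eq_cdf[abs_def]
  by (rule finite_borel_measure.cdf_lim_at_bot
      [OF real_distribution.finite_borel_measure_M[OF real_dist_normal_dist]])

lemma normal_cdf_diff:
  assumes "a \<le> b"
  shows "normal_cdf b - normal_cdf a = integral {a..b} std_normal_density"
proof (cases "a = b")
  case False
  then have "a < b" using assms by simp
  have "normal_cdf b - normal_cdf a = measure std_normal_distribution {a<..b}"
    unfolding normal_cdf_eq_cdf
    by (rule finite_borel_measure.cdf_diff_eq
        [OF real_distribution.finite_borel_measure_M[OF real_dist_normal_dist] \<open>a < b\<close>])
  also have "\<dots> = integral {a<..b} std_normal_density"
    by (simp add: measure_std_normal_distribution)
  also have "\<dots> = integral {a..b} std_normal_density"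
    by (rule integral_spike_set) (auto intro: negligible_subset[of "{a}"])
  finally show ?thesis .
qed simp

lemma normal_cdf_has_real_derivative:
  "(normal_cdf has_real_derivative std_normal_density x) (at x)"
proof -
  have "continuous_on {x-1..x+1} std_normal_density"
    unfolding std_normal_density_def by (intro continuous_intros) auto
  then have "((\<lambda>u. integral {x-1..u} std_normal_density)
      has_real_derivative std_normal_density x) (at x within {x-1..x+1})"
    by (rule integral_has_real_derivative) auto
  then have "((\<lambda>u. normal_cdf (x-1) + integral {x-1..u} std_normal_density)
      has_real_derivative std_normal_density x) (at x within {x-1..x+1})"
    by (intro derivative_eq_intros) auto
  then have "(normal_cdf has_real_derivative std_normal_density x) (at x within {x-1..x+1})"
    by (rule has_field_derivative_transform_within[where d=1])
      (auto simp: normal_cdf_diff[symmetric] dist_real_def)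
  then show ?thesis by (simp add: at_within_Icc_at)
qed

lemmas normal_cdf_has_real_derivative_chain[derivative_intros] =
  normal_cdf_has_real_derivative[THEN DERIV_chain2]

lemma exp_mult_std_normal_density_plus_inverse:
  assumes "x \<noteq> 0"
  shows "exp (\<alpha>\<^sup>2 / 2) * std_normal_density (\<alpha> / 2 * (x + 1 / x))
       = std_normal_density (\<alpha> / 2 * (x - 1 / x))"
proof -
  have "\<alpha>\<^sup>2 / 2 + - (\<alpha> / 2 * (x + 1 / x))\<^sup>2 / 2 = - (\<alpha> / 2 * (x - 1 / x))\<^sup>2 / 2"
    using assms by (simp add: field_simps power2_eq_square)
  then have "exp (\<alpha>\<^sup>2 / 2) * exp (- (\<alpha> / 2 * (x + 1 / x))\<^sup>2 / 2) = exp (- (\<alpha> / 2 * (x - 1 / x))\<^sup>2 / 2)"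
    by (metis exp_add)
  then show ?thesis
    unfolding std_normal_density_def by (metis mult.left_commute)
qed

lemma std_normal_density_less:
  assumes "\<bar>u\<bar> < \<bar>v\<bar>"
  shows "std_normal_density v < std_normal_density u"
proof -
  have "u\<^sup>2 < v\<^sup>2"
    using assms by (metis abs_ge_zero power2_abs power_strict_mono zero_less_numeral)
  then show ?thesis by (simp add: std_normal_density_def divide_strict_right_mono)
qed

lemma chi_has_real_derivative:
  assumes "x > 0"
  shows "(chi \<alpha> has_real_derivative \<alpha> * std_normal_density (\<alpha> / 2 * (x - 1 / x))) (at x)"
proof -
  let ?\<phi>u = "std_normal_density (\<alpha> / 2 * (x - 1 / x))"
  have "(chi \<alpha> has_real_derivative ?\<phi>u * (\<alpha> / 2 * (1 + 1 / x\<^sup>2))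
      - exp (\<alpha>\<^sup>2 / 2) * std_normal_density (- (\<alpha> / 2) * (x + 1 / x)) * (- (\<alpha> / 2) * (1 - 1 / x\<^sup>2)))
      (at x)"
    unfolding chi_def[abs_def] using assms
    by (auto intro!: derivative_eq_intros simp: field_simps power2_eq_square)
  also have "exp (\<alpha>\<^sup>2 / 2) * std_normal_density (- (\<alpha> / 2) * (x + 1 / x)) = ?\<phi>u"
    using exp_mult_std_normal_density_plus_inverse[of x \<alpha>] assms
    by (simp add: std_normal_density_def)
  finally show ?thesis by (simp add: field_simps)
qed

lemma strict_convex_on_if_deriv_strict_mono:
  fixes f f' :: "real \<Rightarrow> real"
  assumes "convex S"
    and deriv: "\<And>x. x \<in> S \<Longrightarrow> (f has_real_derivative f' x) (at x)"
    and mono: "\<And>x y. x \<in> S \<Longrightarrow> y \<in> S \<Longrightarrow> x < y \<Longrightarrow> f' x < f' y"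
  shows "strict_convex_on S f"
proof -
  have chord: "f ((1 - t) * x + t * y) < (1 - t) * f x + t * f y"
    if "x \<in> S" "y \<in> S" "x < y" "0 < t" "t < 1" for x y t
  proof -
    define z where "z = (1 - t) * x + t * y"
    have zx: "z - x = t * (y - x)" and yz: "y - z = (1 - t) * (y - x)"
      unfolding z_def by (simp_all add: algebra_simps)
    have "x < z"
      using zx \<open>x < y\<close> \<open>0 < t\<close> by (metis diff_gt_0_iff_gt mult_pos_pos)
    have "z < y"
      using yz \<open>x < y\<close> \<open>t < 1\<close> by (metis diff_gt_0_iff_gt mult_pos_pos)
    have in_S: "w \<in> S" if "x \<le> w" "w \<le> y" for w
      using connectedD_interval[OF convex_connected[OF \<open>convex S\<close>]] \<open>x \<in> S\<close> \<open>y \<in> S\<close> that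
      by blast
    obtain a where a: "x < a" "a < z" "f z - f x = (z - x) * f' a"
      using MVT2[OF \<open>x < z\<close>, of f f'] deriv in_S \<open>z < y\<close> by force
    obtain b where b: "z < b" "b < y" "f y - f z = (y - z) * f' b"
      using MVT2[OF \<open>z < y\<close>, of f f'] deriv in_S \<open>x < z\<close> by force
    have "f' a < f' b"
      using mono in_S a b by auto
    then have "(t * (1 - t) * (y - x)) * f' a < (t * (1 - t) * (y - x)) * f' b"
      using that by (intro mult_strict_left_mono) auto
    moreover have left: "(1 - t) * (f z - f x) = (t * (1 - t) * (y - x)) * f' a"
      unfolding a(3) zx by (simp add: algebra_simps)
    moreover have right: "t * (f y - f z) = (t * (1 - t) * (y - x)) * f' b"
      unfolding b(3) yz by (simp add: algebra_simps)
    ultimately have "(1 - t) * (f z - f x) < t * (f y - f z)"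
      by (simp only: left right)
    then show ?thesis
      by (simp add: z_def algebra_simps)
  qed
  show ?thesis
    unfolding strict_convex_on_def
  proof (intro conjI \<open>convex S\<close> ballI allI impI)
    fix x y t :: real assume "x \<in> S" "y \<in> S" and xyt: "x \<noteq> y \<and> 0 < t \<and> t < 1"
    show "f ((1 - t) * x + t * y) < (1 - t) * f x + t * f y"
    proof (cases "x < y")
      case False
      then show ?thesis
        using chord[of y x "1 - t"] \<open>x \<in> S\<close> \<open>y \<in> S\<close> xyt by (simp add: algebra_simps)
    qed (use chord \<open>x \<in> S\<close> \<open>y \<in> S\<close> xyt in blast)
  qed
qed

lemma abs_diff_inverse_strict_antimono:
  assumes "0 < x" "x < y" "y \<le> (1::real)"
  shows "\<bar>y - 1 / y\<bar> < \<bar>x - 1 / x\<bar>"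
proof -
  have "1 / y < 1 / x" "1 \<le> 1 / y"
    using assms by (simp_all add: frac_less2)
  then show ?thesis using assms by linarith
qed

lemma abs_diff_inverse_strict_mono:
  assumes "1 \<le> x" "x < (y::real)"
  shows "\<bar>x - 1 / x\<bar> < \<bar>y - 1 / y\<bar>"
proof -
  have "1 / y < 1 / x" "1 / x \<le> 1"
    using assms by (simp_all add: frac_less2)
  then show ?thesis using assms by linarith
qed

lemma chi_tendsto_at_right_0:
  assumes "\<alpha> > 0"
  shows "(chi \<alpha> \<longlongrightarrow> 0) (at_right 0)"
proof -
  have "filterlim (\<lambda>x. \<alpha> / 2 * (x - 1 / x)) at_bot (at_right 0)"
    and "filterlim (\<lambda>x. - (\<alpha> / 2) * (x + 1 / x)) at_bot (at_right 0)"
    using assms by real_asymp+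
  then have "(chi \<alpha> \<longlongrightarrow> 0 - exp (\<alpha>\<^sup>2 / 2) * 0) (at_right 0)"
    unfolding chi_def[abs_def]
    by (intro tendsto_intros filterlim_compose[OF normal_cdf_at_bot])
  then show ?thesis by simp
qed

lemma chi_tendsto_at_top:
  assumes "\<alpha> > 0"
  shows "(chi \<alpha> \<longlongrightarrow> 1) at_top"
proof -
  have "filterlim (\<lambda>x. \<alpha> / 2 * (x - 1 / x)) at_top at_top"
    and "filterlim (\<lambda>x. - (\<alpha> / 2) * (x + 1 / x)) at_bot at_top"
    using assms by real_asymp+
  then have "(chi \<alpha> \<longlongrightarrow> 1 - exp (\<alpha>\<^sup>2 / 2) * 0) at_top"
    unfolding chi_def[abs_def]
    by (intro tendsto_intros filterlim_compose[OF normal_cdf_at_bot]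
        filterlim_compose[OF normal_cdf_at_top])
  then show ?thesis by simp
qed

lemma strict_mono_on_chi:
  assumes "\<alpha> > 0"
  shows "strict_mono_on {0<..} (chi \<alpha>)"
proof (rule strict_mono_onI)
  fix x y :: real assume "x \<in> {0<..}" "x < y"
  show "chi \<alpha> x < chi \<alpha> y"
  proof (rule DERIV_pos_imp_increasing[OF \<open>x < y\<close>])
    fix z assume "x \<le> z"
    then have "z > 0" using \<open>x \<in> {0<..}\<close> by simp
    moreover have "\<alpha> * std_normal_density (\<alpha> / 2 * (z - 1 / z)) > 0"
      using assms by (simp add: normal_density_pos)
    ultimately show "\<exists>d. (chi \<alpha> has_real_derivative d) (at z) \<and> d > 0"
      using chi_has_real_derivative by blast
  qed
qed

lemma strict_convex_on_chi:
  assumes "\<alpha> > 0"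
  shows "strict_convex_on {0<..1} (chi \<alpha>)"
proof (rule strict_convex_on_if_deriv_strict_mono)
  fix x y :: real assume "x \<in> {0<..1}" "y \<in> {0<..1}" "x < y"
  then have "\<bar>\<alpha> / 2 * (y - 1 / y)\<bar> < \<bar>\<alpha> / 2 * (x - 1 / x)\<bar>"
    using assms abs_diff_inverse_strict_antimono[of x y] by (simp add: abs_mult)
  then show "\<alpha> * std_normal_density (\<alpha> / 2 * (x - 1 / x))
      < \<alpha> * std_normal_density (\<alpha> / 2 * (y - 1 / y))"
    using assms by (simp add: std_normal_density_less)
qed (simp, rule chi_has_real_derivative, simp)

lemma strict_concave_on_chi:
  assumes "\<alpha> > 0"
  shows "strict_concave_on {1..} (chi \<alpha>)"
  unfolding strict_concave_on_def
proof (rule strict_convex_on_if_deriv_strict_mono)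
  fix x y :: real assume "x \<in> {1..}" "x < y"
  then have "\<bar>\<alpha> / 2 * (x - 1 / x)\<bar> < \<bar>\<alpha> / 2 * (y - 1 / y)\<bar>"
    using assms abs_diff_inverse_strict_mono[of x y] by (simp add: abs_mult)
  then show "- (\<alpha> * std_normal_density (\<alpha> / 2 * (x - 1 / x)))
      < - (\<alpha> * std_normal_density (\<alpha> / 2 * (y - 1 / y)))"
    using assms by (simp add: std_normal_density_less)
qed (simp, rule DERIV_minus, rule chi_has_real_derivative, simp)

theorem proposition1:
  fixes \<alpha> :: real
  assumes "\<alpha> > 0"
  shows "((chi \<alpha>) \<longlongrightarrow> 0) (at_right 0) \<and>
         ((chi \<alpha>) \<longlongrightarrow> 1) at_top \<and>
         strict_mono_on {0<..} (chi \<alpha>) \<and>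
         strict_convex_on {0<..1} (chi \<alpha>) \<and>
         strict_concave_on {1..} (chi \<alpha>)"
  using chi_tendsto_at_right_0 chi_tendsto_at_top strict_mono_on_chi
    strict_convex_on_chi strict_concave_on_chi assms
  by blast

end
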